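(* Let $s\in(1,2]$ and let $f_1,\dots,f_n\in\overline{B}_s[0,1]$ be linearly independent with $\operatorname{span}\{f_i\}_{i=1}^n\subseteq\overline{B}_s[0,1]\cup\{0\}$. Then there exists a nonempty open interval $I\subset[0,1]$ such that for every $(a_1,\dots,a_n)\in\mathbb{R}^n\setminus\{(0,\dots,0)\}$, $\overline{\dim}_B G_{\sum_{i=1}^n a_if_i}([0,1]\setminus I)=s$, i.e. $\big(\sum_{i=1}^n a_if_i\big)|_{[0,1]\setminus I}\in\overline{B}_s([0,1]\setminus I)$.
   Context: $C[0,1]$ is the space of real-valued continuous functions on $[0,1]$; $G_f(E)=\{(x,f(x)):x\in E\}$; $\overline{\dim}_B$ is upper box dimension. For $E\subseteq[0,1]$, $\overline{B}_s(E)$ is the set of bounded continuous real functions $f$ on $E$ with $\overline{\dim}_B G_f(E)=s$; in particular $\overline{B}_s[0,1]=\{f\in C[0,1]:\overline{\dim}_B G_f([0,1])=s\}$. *)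

theory Defs
  imports "HOL-Analysis.Analysis"
begin

definition graph_on :: "(real \<Rightarrow> real) \<Rightarrow> real set \<Rightarrow> (real \<times> real) set" where
  "graph_on f E = (\<lambda>x. (x, f x)) ` E"

definition cover_num :: "real \<Rightarrow> (real \<times> real) set \<Rightarrow> nat" where
  "cover_num \<delta> F = (LEAST k. \<exists>C. finite C \<and> card C = k \<and> F \<subseteq> (\<Union>c\<in>C. cball c \<delta>))"

definition upper_box_dim :: "(real \<times> real) set \<Rightarrow> ereal" where
  "upper_box_dim F =
     Limsup (at_right (0::real)) (\<lambda>\<delta>. ereal (ln (real (cover_num \<delta> F)) / (- ln \<delta>)))"

end

(*
  Cut [0,1] into the n + 1 cells I_k = (k/(n+1), (k+1)/(n+1)). If no cell works, then for every k
  some nonzero g_k in the span has a graph over [0,1] - I_k of upper box dimension below s, and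
  one t with 1 <= t < s bounds all these dimensions. Among n + 1 vectors of an n-dimensional
  space, some g_k0 is a linear combination of the others. Over the closed cell of k0 every other
  g_k lives outside its own cell, and counting delta-balls column by column shows that the graph
  of a linear combination of continuous functions on an interval has dimension at most the
  maximum of 1 and the dimensions of the summands. Gluing the closed cell of k0 to
  [0,1] - I_k0 then bounds the dimension of the whole graph of g_k0 by t < s, contradicting
  the hypothesis on the span.
*)

theory Submission
  imports Defs "HOL-Real_Asymp.Real_Asymp"
begin

section \<open>Covering numbers and upper box dimension\<close>

lemma cover_num_le:
  assumes "finite C" "F \<subseteq> (\<Union>c\<in>C. cball c \<delta>)"
  shows "cover_num \<delta> F \<le> card C"
  unfolding cover_num_def by (rule Least_le) (use assms in blast)

lemma cover_num_attained:
  assumes "compact F" "\<delta> > 0"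
  obtains C where "finite C" "card C = cover_num \<delta> F" "F \<subseteq> (\<Union>c\<in>C. cball c \<delta>)"
proof -
  obtain C where C: "finite C" "F \<subseteq> (\<Union>c\<in>C. ball c \<delta>)"
  proof (rule compactE_image[OF assms(1), of F "\<lambda>c. ball c \<delta>"])
    show "F \<subseteq> (\<Union>c\<in>F. ball c \<delta>)" using assms(2) by auto
  qed auto
  have "F \<subseteq> (\<Union>c\<in>C. cball c \<delta>)"
    using C(2) by (rule order_trans) (intro UN_mono order_refl ball_subset_cball)
  with C(1) have "\<exists>C'. finite C' \<and> card C' = card C \<and> F \<subseteq> (\<Union>c\<in>C'. cball c \<delta>)"
    by blast
  from LeastI[of "\<lambda>k. \<exists>C. finite C \<and> card C = k \<and> F \<subseteq> (\<Union>c\<in>C. cball c \<delta>)", OF this]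
  show ?thesis
    using that unfolding cover_num_def by blast
qed

lemma cover_num_mono:
  assumes "F \<subseteq> F'" "compact F'" "\<delta> > 0"
  shows "cover_num \<delta> F \<le> cover_num \<delta> F'"
proof -
  obtain C where C: "finite C" "card C = cover_num \<delta> F'" "F' \<subseteq> (\<Union>c\<in>C. cball c \<delta>)"
    using cover_num_attained[OF assms(2,3)] .
  have "F \<subseteq> (\<Union>c\<in>C. cball c \<delta>)" using assms(1) C(3) by (rule order_trans)
  then have "cover_num \<delta> F \<le> card C" by (rule cover_num_le[OF C(1)])
  with C(2) show ?thesis by simp
qed

lemma cover_num_UN_le:
  assumes "finite K" "\<And>k. k \<in> K \<Longrightarrow> compact (F k)" "\<delta> > 0"
  shows "cover_num \<delta> (\<Union>k\<in>K. F k) \<le> (\<Sum>k\<in>K. cover_num \<delta> (F k))"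
proof -
  have "\<forall>k\<in>K. \<exists>C. finite C \<and> card C = cover_num \<delta> (F k) \<and> F k \<subseteq> (\<Union>c\<in>C. cball c \<delta>)"
  proof
    fix k assume "k \<in> K"
    obtain C where "finite C" "card C = cover_num \<delta> (F k)" "F k \<subseteq> (\<Union>c\<in>C. cball c \<delta>)"
      by (rule cover_num_attained[OF assms(2)[OF \<open>k \<in> K\<close>] assms(3)])
    then show "\<exists>C. finite C \<and> card C = cover_num \<delta> (F k) \<and> F k \<subseteq> (\<Union>c\<in>C. cball c \<delta>)"
      by blast
  qed
  from bchoice[OF this] obtain C where C: "\<forall>k\<in>K.
      finite (C k) \<and> card (C k) = cover_num \<delta> (F k) \<and> F k \<subseteq> (\<Union>c\<in>C k. cball c \<delta>)"
    by blast
  have "F k \<subseteq> (\<Union>c\<in>(\<Union>k\<in>K. C k). cball c \<delta>)" if "k \<in> K" for k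
    using C that by blast
  then have "cover_num \<delta> (\<Union>k\<in>K. F k) \<le> card (\<Union>k\<in>K. C k)"
    using C assms(1) by (intro cover_num_le UN_least) auto
  also have "\<dots> \<le> (\<Sum>k\<in>K. card (C k))" by (rule card_UN_le[OF assms(1)])
  also have "\<dots> = (\<Sum>k\<in>K. cover_num \<delta> (F k))" by (rule sum.cong) (simp_all add: C)
  finally show ?thesis .
qed

lemma cover_num_Un_le:
  assumes "compact A" "compact B" "\<delta> > 0"
  shows "cover_num \<delta> (A \<union> B) \<le> cover_num \<delta> A + cover_num \<delta> B"
proof -
  obtain C where C: "finite C" "card C = cover_num \<delta> A" "A \<subseteq> (\<Union>c\<in>C. cball c \<delta>)"
    using cover_num_attained[OF assms(1,3)] .
  obtain D where D: "finite D" "card D = cover_num \<delta> B" "B \<subseteq> (\<Union>c\<in>D. cball c \<delta>)"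
    using cover_num_attained[OF assms(2,3)] .
  have "cover_num \<delta> (A \<union> B) \<le> card (C \<union> D)"
    using C D by (intro cover_num_le) auto
  also have "\<dots> \<le> card C + card D" by (rule card_Un_le)
  finally show ?thesis using C D by simp
qed

lemma graph_on_cong:
  "(\<And>x. x \<in> E \<Longrightarrow> g x = h x) \<Longrightarrow> graph_on g E = graph_on h E"
  unfolding graph_on_def by auto

lemma graph_on_mono: "E \<subseteq> E' \<Longrightarrow> graph_on g E \<subseteq> graph_on g E'"
  unfolding graph_on_def by auto

lemma graph_on_Un: "graph_on g (E \<union> E') = graph_on g E \<union> graph_on g E'"
  unfolding graph_on_def by (rule image_Un)

lemma graph_on_UN: "graph_on g (\<Union>k\<in>K. E k) = (\<Union>k\<in>K. graph_on g (E k))"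
  unfolding graph_on_def by (rule image_UN)

lemma compact_graph_on:
  "compact E \<Longrightarrow> continuous_on E g \<Longrightarrow> compact (graph_on g E)"
  unfolding graph_on_def by (auto intro!: compact_continuous_image continuous_intros)

lemma eventually_cover_num_le_powr:
  assumes "upper_box_dim F < ereal t"
  shows "\<forall>\<^sub>F \<delta> in at_right 0. real (cover_num \<delta> F) \<le> \<delta> powr (- t)"
  using Limsup_lessD[OF assms[unfolded upper_box_dim_def]]
    eventually_at_right_real[OF zero_less_one]
proof eventually_elim
  case (elim \<delta>)
  then have "0 < - ln \<delta>" by simp
  from elim have "ln (real (cover_num \<delta> F)) / (- ln \<delta>) < t" by simp
  then have "ln (real (cover_num \<delta> F)) < t * (- ln \<delta>)"
    using \<open>0 < - ln \<delta>\<close> by (simp only: pos_divide_less_eq)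
  then have "ln (real (cover_num \<delta> F)) < ln (\<delta> powr (- t))"
    using elim by (simp add: ln_powr)
  show ?case
  proof (cases "cover_num \<delta> F = 0")
    case False
    with \<open>ln (real (cover_num \<delta> F)) < ln (\<delta> powr (- t))\<close> elim show ?thesis
      by (subst (asm) ln_less_cancel_iff) auto
  qed simp
qed

text \<open>The hypothesis \<open>0 \<le> t\<close> is needed for the empty set, where \<open>cover_num\<close> is \<open>0\<close>
  and \<open>ln 0 = 0\<close>.\<close>

lemma upper_box_dim_le_of_cover_num_le:
  assumes "0 \<le> t" "\<forall>\<^sub>F \<delta> in at_right 0. real (cover_num \<delta> F) \<le> C * \<delta> powr (- t)"
  shows "upper_box_dim F \<le> ereal t"
proof -
  define C' where "C' = max C 1"
  have "\<forall>\<^sub>F \<delta> in at_right 0. ereal (ln (real (cover_num \<delta> F)) / (- ln \<delta>))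
          \<le> ereal (ln C' / (- ln \<delta>) + t)"
    using assms(2) eventually_at_right_real[OF zero_less_one]
  proof eventually_elim
    case (elim \<delta>)
    have "0 < - ln \<delta>" using elim by simp
    show ?case
    proof (cases "cover_num \<delta> F = 0")
      case False
      have "real (cover_num \<delta> F) \<le> C' * \<delta> powr (- t)"
        using elim(1) by (rule order_trans) (simp add: C'_def mult_right_mono)
      then have "ln (real (cover_num \<delta> F)) \<le> ln (C' * \<delta> powr (- t))"
        using False by simp
      also have "\<dots> = ln C' + t * (- ln \<delta>)"
        using elim(2) by (simp add: C'_def ln_mult ln_powr)
      finally have "ln (real (cover_num \<delta> F)) / (- ln \<delta>) \<le> (ln C' + t * (- ln \<delta>)) / (- ln \<delta>)"
        using \<open>0 < - ln \<delta>\<close> by (simp only: divide_right_mono less_imp_le)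
      also have "\<dots> = ln C' / (- ln \<delta>) + t"
        using \<open>0 < - ln \<delta>\<close> by (simp add: field_simps)
      finally show ?thesis by simp
    next
      case True
      have "0 \<le> ln C' / (- ln \<delta>)"
        using \<open>0 < - ln \<delta>\<close> by (intro divide_nonneg_pos) (simp_all add: C'_def)
      with True assms(1) show ?thesis by simp
    qed
  qed
  then have "upper_box_dim F \<le> Limsup (at_right 0) (\<lambda>\<delta>. ereal (ln C' / (- ln \<delta>) + t))"
    unfolding upper_box_dim_def by (rule Limsup_mono)
  also have "\<dots> = ereal t"
  proof (rule lim_imp_Limsup)
    have "((\<lambda>\<delta>::real. ln C' / (- ln \<delta>) + t) \<longlongrightarrow> t) (at_right 0)" by real_asymp
    then show "((\<lambda>\<delta>. ereal (ln C' / (- ln \<delta>) + t)) \<longlongrightarrow> ereal t) (at_right 0)" by simp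
  qed simp
  finally show ?thesis .
qed

lemma upper_box_dim_mono:
  assumes "F \<subseteq> F'" "compact F'"
  shows "upper_box_dim F \<le> upper_box_dim F'"
  unfolding upper_box_dim_def
proof (rule Limsup_mono)
  show "\<forall>\<^sub>F \<delta> in at_right 0. ereal (ln (real (cover_num \<delta> F)) / (- ln \<delta>))
          \<le> ereal (ln (real (cover_num \<delta> F')) / (- ln \<delta>))"
    using eventually_at_right_real[OF zero_less_one]
  proof eventually_elim
    case (elim \<delta>)
    have "cover_num \<delta> F \<le> cover_num \<delta> F'" using cover_num_mono assms elim by simp
    then have "ln (real (cover_num \<delta> F)) \<le> ln (real (cover_num \<delta> F'))"
      by (cases "cover_num \<delta> F = 0"; cases "cover_num \<delta> F' = 0") auto
    moreover have "0 \<le> - ln \<delta>" using elim by simp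
    ultimately show ?case by (simp only: ereal_less_eq divide_right_mono)
  qed
qed

lemma upper_box_dim_Un_le:
  assumes "compact A" "compact B" "0 \<le> t"
    and "upper_box_dim A \<le> ereal t" "upper_box_dim B \<le> ereal t"
  shows "upper_box_dim (A \<union> B) \<le> ereal t"
proof (rule ereal_le_epsilon2)
  fix e :: real assume "0 < e"
  then have "upper_box_dim A < ereal (t + e)" "upper_box_dim B < ereal (t + e)"
    using assms(4,5) by (simp_all add: le_less_trans)
  from this[THEN eventually_cover_num_le_powr] eventually_at_right_real[OF zero_less_one]
  have "\<forall>\<^sub>F \<delta> in at_right 0. real (cover_num \<delta> (A \<union> B)) \<le> 2 * \<delta> powr (- (t + e))"
  proof eventually_elim
    case (elim \<delta>)
    then have "cover_num \<delta> (A \<union> B) \<le> cover_num \<delta> A + cover_num \<delta> B"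
      using assms(1,2) by (intro cover_num_Un_le) auto
    then have "real (cover_num \<delta> (A \<union> B)) \<le> real (cover_num \<delta> A) + real (cover_num \<delta> B)"
      by (metis of_nat_add of_nat_mono)
    with elim show ?case by linarith
  qed
  then have "upper_box_dim (A \<union> B) \<le> ereal (t + e)"
    using assms(3) \<open>0 < e\<close> by (intro upper_box_dim_le_of_cover_num_le) auto
  then show "upper_box_dim (A \<union> B) \<le> ereal t + ereal e" by simp
qed

section \<open>Graphs of linear combinations\<close>

lemma Icc_length_le_card_cover:
  fixes p q r :: real
  assumes "finite D" "{p..q} \<subseteq> (\<Union>y\<in>D. {y - r..y + r})" "p \<le> q" "0 \<le> r"
  shows "q - p \<le> 2 * r * card D"
proof -
  have "ennreal (q - p) = emeasure lborel {p..q}" using assms(3) by simp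
  also have "\<dots> \<le> emeasure lborel (\<Union>y\<in>D. {y - r..y + r})"
    by (rule emeasure_mono[OF assms(2)]) (use assms(1) in auto)
  also have "\<dots> \<le> (\<Sum>y\<in>D. emeasure lborel {y - r..y + r})"
    by (rule emeasure_subadditive_finite[OF assms(1)]) auto
  also have "\<dots> = (\<Sum>y\<in>D. ennreal (2 * r))" using assms(4) by (intro sum.cong) auto
  also have "\<dots> = ennreal (2 * r * card D)"
    using assms(4)
    by (simp add: ennreal_of_nat_eq_real_of_nat ennreal_mult'[symmetric] mult.commute)
  finally show ?thesis using assms by (simp add: ennreal_le_iff)
qed

lemma card_nat_interval_le:
  assumes "K \<subseteq> {k::nat. r \<le> real k \<and> real k \<le> r + real l}"
  shows "card K \<le> l + 1"
proof -
  have "K \<subseteq> {nat \<lceil>r\<rceil> .. nat \<lceil>r\<rceil> + l}"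
  proof
    fix k assume "k \<in> K"
    then have k: "r \<le> real k" "real k \<le> r + real l" using assms by auto
    then have "\<lceil>r\<rceil> \<le> int k" by (simp add: ceiling_le_iff)
    moreover have "real k \<le> real_of_int \<lceil>r\<rceil> + real l"
      using k(2) le_of_int_ceiling[of r] by linarith
    then have "real_of_int (int k) \<le> real_of_int (\<lceil>r\<rceil> + int l)" by simp
    then have "int k \<le> \<lceil>r\<rceil> + int l" by (simp only: of_int_le_iff)
    ultimately have "nat \<lceil>r\<rceil> \<le> k" "k \<le> nat \<lceil>r\<rceil> + l" by arith+
    then show "k \<in> {nat \<lceil>r\<rceil> .. nat \<lceil>r\<rceil> + l}" by simp
  qed
  then have "card K \<le> card {nat \<lceil>r\<rceil> .. nat \<lceil>r\<rceil> + l}"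
    by (rule card_mono[rotated]) simp
  then show ?thesis by simp
qed

lemma sum_card_strips_le:
  fixes p :: "'a \<Rightarrow> real"
  assumes "finite D" "0 < \<delta>"
  shows "(\<Sum>k<m. card {d\<in>D. a + (real k - 1) * \<delta> \<le> p d \<and> p d \<le> a + (real k + 2) * \<delta>})
         \<le> 4 * card D"
proof -
  define P where "P d k \<longleftrightarrow> a + (real k - 1) * \<delta> \<le> p d \<and> p d \<le> a + (real k + 2) * \<delta>" for d k
  have "(\<Sum>k<m. card {d\<in>D. P d k}) = (\<Sum>k<m. \<Sum>d\<in>D. if P d k then 1 else 0)"
    by (simp add: sum.inter_filter[OF assms(1), symmetric])
  also have "\<dots> = (\<Sum>d\<in>D. card {k\<in>{..<m}. P d k})"
    by (subst sum.swap) (simp add: sum.inter_filter[symmetric])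
  also have "\<dots> \<le> (\<Sum>d\<in>D. 4)"
  proof (rule sum_mono)
    fix d
    define r where "r = (p d - a) / \<delta> - 2"
    have "r \<le> real k \<and> real k \<le> r + real 3" if "P d k" for k
    proof -
      from that have "p d - a \<le> (real k + 2) * \<delta>" "(real k - 1) * \<delta> \<le> p d - a"
        by (auto simp: P_def)
      then have "(p d - a) / \<delta> \<le> real k + 2" "real k - 1 \<le> (p d - a) / \<delta>"
        using assms(2) by (simp_all only: pos_divide_le_eq pos_le_divide_eq)
      then show ?thesis by (simp add: r_def)
    qed
    then have "{k\<in>{..<m}. P d k} \<subseteq> {k. r \<le> real k \<and> real k \<le> r + real 3}"
      by blast
    from card_nat_interval_le[OF this] show "card {k\<in>{..<m}. P d k} \<le> 4" by simp
  qed
  finally show ?thesis unfolding P_def by simp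
qed

lemma abs_diff_le_of_graph_cover:
  assumes "connected S" "continuous_on S g" "finite D"
    and cover: "graph_on g S \<subseteq> (\<Union>d\<in>D. cball d \<delta>)"
    and "x \<in> S" "x' \<in> S"
  shows "\<bar>g x - g x'\<bar> \<le> 2 * \<delta> * card D"
proof -
  define p q where "p = min (g x) (g x')" and "q = max (g x) (g x')"
  have "(x, g x) \<in> (\<Union>d\<in>D. cball d \<delta>)"
    using \<open>x \<in> S\<close> by (intro subsetD[OF cover]) (simp add: graph_on_def)
  then have "0 \<le> \<delta>" by (auto intro: order_trans[OF zero_le_dist])
  have "{p..q} \<subseteq> g ` S"
    using connected_continuous_image[OF assms(2,1)] \<open>x \<in> S\<close> \<open>x' \<in> S\<close>
    by (intro connected_contains_Icc) (auto simp: p_def q_def min_def max_def)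
  also have "g ` S \<subseteq> (\<Union>y\<in>snd ` D. {y - \<delta>..y + \<delta>})"
  proof
    fix y assume "y \<in> g ` S"
    then obtain z where "z \<in> S" "y = g z" by blast
    then have "(z, y) \<in> graph_on g S" unfolding graph_on_def by blast
    then have "(z, y) \<in> (\<Union>d\<in>D. cball d \<delta>)" by (rule subsetD[OF cover])
    then obtain d where "d \<in> D" "dist d (z, y) \<le> \<delta>" by auto
    moreover have "dist (snd d) y \<le> dist d (z, y)" using dist_snd_le[of d "(z, y)"] by simp
    ultimately have "snd d \<in> snd ` D" "y \<in> {snd d - \<delta>..snd d + \<delta>}"
      by (auto simp: dist_real_def abs_le_iff)
    then show "y \<in> (\<Union>y\<in>snd ` D. {y - \<delta>..y + \<delta>})" by blast
  qed
  finally have "q - p \<le> 2 * \<delta> * card (snd ` D)"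
    using \<open>0 \<le> \<delta>\<close> assms(3) by (intro Icc_length_le_card_cover) (auto simp: p_def q_def)
  also have "\<dots> \<le> 2 * \<delta> * card D"
    using card_image_le[OF assms(3), of snd] \<open>0 \<le> \<delta>\<close> by (simp add: mult_left_mono)
  finally show ?thesis unfolding p_def q_def by linarith
qed

lemma cover_num_graph_le_oscillation:
  assumes "0 < \<delta>" "0 \<le> R" "S \<subseteq> {l..l + \<delta>}"
    and osc: "\<And>x y. x \<in> S \<Longrightarrow> y \<in> S \<Longrightarrow> \<bar>h x - h y\<bar> \<le> R"
  shows "real (cover_num \<delta> (graph_on h S)) \<le> 2 * R / \<delta> + 2"
proof (cases "S = {}")
  case True
  then have "cover_num \<delta> (graph_on h S) = 0"
    using cover_num_le[of "{}" "graph_on h S" \<delta>] by (simp add: graph_on_def)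
  with assms(1,2) show ?thesis by simp
next
  case False
  then obtain y where "y \<in> S" by blast
  define T where "T = nat \<lceil>2 * R / \<delta>\<rceil>"
  define C where "C = (\<lambda>t. (l + \<delta> / 2, h y - R + real t * \<delta>)) ` {..T}"
  have "graph_on h S \<subseteq> (\<Union>c\<in>C. cball c \<delta>)"
  proof
    fix z assume "z \<in> graph_on h S"
    then obtain x where x: "x \<in> S" "z = (x, h x)" unfolding graph_on_def by blast
    define w where "w = (h x - h y + R) / \<delta>"
    define t where "t = nat \<lfloor>w + 1 / 2\<rfloor>"
    have "0 \<le> w" "w \<le> 2 * R / \<delta>"
      using osc[OF x(1) \<open>y \<in> S\<close>] assms(1) by (auto simp: w_def abs_le_iff divide_right_mono)
    then have "\<bar>real t - w\<bar> \<le> 1 / 2" "t \<le> T"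
      unfolding t_def T_def by linarith+
    then have "\<bar>h y - R + real t * \<delta> - h x\<bar> \<le> \<delta> / 2"
      using assms(1) by (simp add: w_def field_simps abs_le_iff)
    moreover have "\<bar>l + \<delta> / 2 - x\<bar> \<le> \<delta> / 2"
      using assms(3) x(1) unfolding abs_le_iff by auto
    ultimately have "dist (l + \<delta> / 2, h y - R + real t * \<delta>) z \<le> sqrt ((\<delta> / 2)\<^sup>2 + (\<delta> / 2)\<^sup>2)"
      unfolding x(2) dist_Pair_Pair dist_real_def
      by (intro real_sqrt_le_mono add_mono power_mono) auto
    also have "\<dots> \<le> \<delta>"
      using assms(1) by (simp add: real_le_lsqrt power2_eq_square)
    finally show "z \<in> (\<Union>c\<in>C. cball c \<delta>)"
      using \<open>t \<le> T\<close> unfolding C_def by force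
  qed
  then have "cover_num \<delta> (graph_on h S) \<le> card C"
    by (rule cover_num_le[rotated]) (simp add: C_def)
  also have "card C \<le> T + 1"
    unfolding C_def using card_image_le[of "{..T}"] by simp
  finally have "real (cover_num \<delta> (graph_on h S)) \<le> real T + 1" by simp
  also have "\<dots> \<le> 2 * R / \<delta> + 2"
  proof -
    have "0 \<le> 2 * R / \<delta>" using assms(1,2) by simp
    then have "real T = of_int \<lceil>2 * R / \<delta>\<rceil>" by (simp add: T_def)
    with ceiling_correct[of "2 * R / \<delta>"] show ?thesis by linarith
  qed
  finally show ?thesis .
qed

definition grid_column :: "real \<Rightarrow> real \<Rightarrow> real \<Rightarrow> nat \<Rightarrow> real set" where
  "grid_column a b \<delta> k = {a..b} \<inter> {a + real k * \<delta> .. a + real k * \<delta> + \<delta>}"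

lemma grid_column_eq_Icc:
  "grid_column a b \<delta> k = {max a (a + real k * \<delta>) .. min b (a + real k * \<delta> + \<delta>)}"
  unfolding grid_column_def by (rule Int_atLeastAtMost)

lemma Icc_eq_UN_grid_columns:
  assumes "a \<le> b" "0 < \<delta>"
  shows "{a..b} = (\<Union>k<nat \<lfloor>(b - a) / \<delta>\<rfloor> + 1. grid_column a b \<delta> k)"
proof (intro equalityI subsetI)
  fix x assume x: "x \<in> {a..b}"
  define k where "k = nat \<lfloor>(x - a) / \<delta>\<rfloor>"
  have "0 \<le> (x - a) / \<delta>" using x assms(2) by simp
  then have "real k \<le> (x - a) / \<delta>" "(x - a) / \<delta> < real k + 1"
    unfolding k_def by linarith+
  then have "x \<in> grid_column a b \<delta> k"
    using x assms(2)
    by (simp add: grid_column_def pos_le_divide_eq pos_divide_less_eq algebra_simps)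
  moreover have "\<lfloor>(x - a) / \<delta>\<rfloor> \<le> \<lfloor>(b - a) / \<delta>\<rfloor>"
    using x assms(2) by (intro floor_mono divide_right_mono) auto
  then have "k < nat \<lfloor>(b - a) / \<delta>\<rfloor> + 1" unfolding k_def by linarith
  ultimately show "x \<in> (\<Union>k<nat \<lfloor>(b - a) / \<delta>\<rfloor> + 1. grid_column a b \<delta> k)" by blast
qed (auto simp: grid_column_def)

lemma cover_num_graph_le_grid_column_oscillation:
  assumes "a \<le> b" "0 < \<delta>" "continuous_on {a..b} h" "\<And>k. 0 \<le> R k"
    and osc: "\<And>k x y. x \<in> grid_column a b \<delta> k \<Longrightarrow> y \<in> grid_column a b \<delta> k \<Longrightarrow> \<bar>h x - h y\<bar> \<le> R k"
  shows "real (cover_num \<delta> (graph_on h {a..b})) \<le> (\<Sum>k<nat \<lfloor>(b - a) / \<delta>\<rfloor> + 1. 2 * R k / \<delta> + 2)"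
proof -
  define m where "m = nat \<lfloor>(b - a) / \<delta>\<rfloor> + 1"
  have "graph_on h {a..b} = (\<Union>k<m. graph_on h (grid_column a b \<delta> k))"
    unfolding m_def graph_on_UN[symmetric]
    by (rule arg_cong[OF Icc_eq_UN_grid_columns[OF assms(1,2)]])
  moreover have "compact (graph_on h (grid_column a b \<delta> k))" for k
    using assms(3)
    by (intro compact_graph_on) (auto simp: grid_column_eq_Icc intro: continuous_on_subset)
  ultimately have "cover_num \<delta> (graph_on h {a..b})
      \<le> (\<Sum>k<m. cover_num \<delta> (graph_on h (grid_column a b \<delta> k)))"
    using assms(2) by (simp add: cover_num_UN_le)
  then have "real (cover_num \<delta> (graph_on h {a..b}))
      \<le> (\<Sum>k<m. real (cover_num \<delta> (graph_on h (grid_column a b \<delta> k))))"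
    by (metis of_nat_mono of_nat_sum)
  also have "\<dots> \<le> (\<Sum>k<m. 2 * R k / \<delta> + 2)"
  proof (rule sum_mono)
    fix k
    show "real (cover_num \<delta> (graph_on h (grid_column a b \<delta> k))) \<le> 2 * R k / \<delta> + 2"
    proof (rule cover_num_graph_le_oscillation[where l = "a + real k * \<delta>"])
      show "grid_column a b \<delta> k \<subseteq> {a + real k * \<delta> .. a + real k * \<delta> + \<delta>}"
        by (auto simp: grid_column_def)
    qed (use assms(2,4) osc in auto)
  qed
  finally show ?thesis unfolding m_def .
qed

text \<open>On a column the oscillation of \<open>g\<close> is at most \<open>2 \<delta>\<close> times the number of balls of an
  optimal cover centred over that column or its two neighbours, and each ball is counted for at
  most four columns.\<close>

lemma exists_grid_column_oscillation_bound:
  assumes "0 < \<delta>" "continuous_on {a..b} g"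
  shows "\<exists>r. (\<forall>k. 0 \<le> r k) \<and>
    (\<forall>k. \<forall>x\<in>grid_column a b \<delta> k. \<forall>y\<in>grid_column a b \<delta> k. \<bar>g x - g y\<bar> \<le> r k) \<and>
    (\<Sum>k<m. r k) \<le> 8 * \<delta> * real (cover_num \<delta> (graph_on g {a..b}))"
proof -
  obtain D where D: "finite D" "card D = cover_num \<delta> (graph_on g {a..b})"
    and cover: "graph_on g {a..b} \<subseteq> (\<Union>d\<in>D. cball d \<delta>)"
    using cover_num_attained[OF compact_graph_on[OF compact_Icc assms(2)] assms(1)] .
  define B where "B k = {d \<in> D. a + (real k - 1) * \<delta> \<le> fst d \<and> fst d \<le> a + (real k + 2) * \<delta>}" for k
  have cover_grid_column: "graph_on g (grid_column a b \<delta> k) \<subseteq> (\<Union>d\<in>B k. cball d \<delta>)" for k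
  proof
    fix z assume "z \<in> graph_on g (grid_column a b \<delta> k)"
    then obtain x where x: "x \<in> grid_column a b \<delta> k" "z = (x, g x)" unfolding graph_on_def by blast
    then have "z \<in> graph_on g {a..b}" unfolding grid_column_def graph_on_def by blast
    then have "z \<in> (\<Union>d\<in>D. cball d \<delta>)" by (rule subsetD[OF cover])
    then obtain d where d: "d \<in> D" "dist d z \<le> \<delta>" by auto
    have "\<bar>fst d - x\<bar> \<le> \<delta>" using dist_fst_le[of d z] d(2) x(2) by (simp add: dist_real_def)
    then have "d \<in> B k"
      using d(1) x(1) unfolding B_def grid_column_def abs_le_iff by (auto simp: algebra_simps)
    with d(2) show "z \<in> (\<Union>d\<in>B k. cball d \<delta>)" by auto
  qed
  have "\<bar>g x - g y\<bar> \<le> 2 * \<delta> * card (B k)"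
    if "x \<in> grid_column a b \<delta> k" "y \<in> grid_column a b \<delta> k" for k x y
  proof (rule abs_diff_le_of_graph_cover[OF _ _ _ cover_grid_column that])
    show "connected (grid_column a b \<delta> k)" by (simp add: grid_column_eq_Icc)
    show "continuous_on (grid_column a b \<delta> k) g"
      using assms(2) by (rule continuous_on_subset) (auto simp: grid_column_def)
    show "finite (B k)" using D(1) by (simp add: B_def)
  qed
  moreover have "(\<Sum>k<m. 2 * \<delta> * card (B k)) \<le> 8 * \<delta> * real (cover_num \<delta> (graph_on g {a..b}))"
  proof -
    have "(\<Sum>k<m. card (B k)) \<le> 4 * card D"
      unfolding B_def by (rule sum_card_strips_le[OF D(1) assms(1)])
    then have "real (\<Sum>k<m. card (B k)) \<le> 4 * real (card D)"
      by (metis of_nat_mono of_nat_mult of_nat_numeral)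
    then show ?thesis
      using assms(1) D(2) by (simp add: sum_distrib_left[symmetric])
  qed
  ultimately show ?thesis using assms(1) by (intro exI[of _ "\<lambda>k. 2 * \<delta> * card (B k)"]) auto
qed

lemma cover_num_graph_lincomb_le:
  fixes g :: "'j \<Rightarrow> real \<Rightarrow> real"
  assumes "finite J" "a \<le> b" "0 < \<delta>"
    and cont: "\<And>j. j \<in> J \<Longrightarrow> continuous_on {a..b} (g j)"
  shows "real (cover_num \<delta> (graph_on (\<lambda>x. \<Sum>j\<in>J. c j * g j x) {a..b}))
         \<le> (\<Sum>j\<in>J. 16 * \<bar>c j\<bar> * real (cover_num \<delta> (graph_on (g j) {a..b}))) + 2 * ((b - a) / \<delta> + 1)"
proof -
  define m where "m = nat \<lfloor>(b - a) / \<delta>\<rfloor> + 1"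
  define N where "N j = real (cover_num \<delta> (graph_on (g j) {a..b}))" for j
  have "\<forall>j\<in>J. \<exists>r. (\<forall>k. 0 \<le> r k) \<and>
      (\<forall>k. \<forall>x\<in>grid_column a b \<delta> k. \<forall>y\<in>grid_column a b \<delta> k. \<bar>g j x - g j y\<bar> \<le> r k) \<and>
      (\<Sum>k<m. r k) \<le> 8 * \<delta> * N j"
    using exists_grid_column_oscillation_bound[OF assms(3) cont] unfolding N_def by blast
  from bchoice[OF this] obtain r where r: "\<forall>j\<in>J. (\<forall>k. 0 \<le> r j k) \<and>
      (\<forall>k. \<forall>x\<in>grid_column a b \<delta> k. \<forall>y\<in>grid_column a b \<delta> k. \<bar>g j x - g j y\<bar> \<le> r j k) \<and>
      (\<Sum>k<m. r j k) \<le> 8 * \<delta> * N j"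
    by blast
  define R where "R k = (\<Sum>j\<in>J. \<bar>c j\<bar> * r j k)" for k
  have osc: "\<bar>(\<Sum>j\<in>J. c j * g j x) - (\<Sum>j\<in>J. c j * g j y)\<bar> \<le> R k"
    if "x \<in> grid_column a b \<delta> k" "y \<in> grid_column a b \<delta> k" for k x y
  proof -
    have "\<bar>(\<Sum>j\<in>J. c j * g j x) - (\<Sum>j\<in>J. c j * g j y)\<bar> = \<bar>\<Sum>j\<in>J. c j * (g j x - g j y)\<bar>"
      by (simp add: sum_subtractf right_diff_distrib)
    also have "\<dots> \<le> (\<Sum>j\<in>J. \<bar>c j\<bar> * \<bar>g j x - g j y\<bar>)"
      by (rule order_trans[OF sum_abs]) (simp add: abs_mult)
    also have "\<dots> \<le> R k"
      unfolding R_def using r that by (intro sum_mono mult_left_mono) auto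
    finally show ?thesis .
  qed
  have "real (cover_num \<delta> (graph_on (\<lambda>x. \<Sum>j\<in>J. c j * g j x) {a..b})) \<le> (\<Sum>k<m. 2 * R k / \<delta> + 2)"
    unfolding m_def using assms(2,3) osc r
    by (intro cover_num_graph_le_grid_column_oscillation continuous_intros cont)
       (auto simp: R_def intro!: sum_nonneg)
  also have "\<dots> = 2 / \<delta> * (\<Sum>j\<in>J. \<bar>c j\<bar> * (\<Sum>k<m. r j k)) + 2 * real m"
    by (simp add: R_def sum.distrib sum_distrib_left sum_divide_distrib sum.swap[of _ J] mult_ac)
  also have "\<dots> \<le> 2 / \<delta> * (\<Sum>j\<in>J. \<bar>c j\<bar> * (8 * \<delta> * N j)) + 2 * ((b - a) / \<delta> + 1)"
  proof (rule add_mono)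
    show "2 / \<delta> * (\<Sum>j\<in>J. \<bar>c j\<bar> * (\<Sum>k<m. r j k)) \<le> 2 / \<delta> * (\<Sum>j\<in>J. \<bar>c j\<bar> * (8 * \<delta> * N j))"
      using r assms(3) by (intro mult_left_mono sum_mono) auto
    have "real (nat \<lfloor>(b - a) / \<delta>\<rfloor>) \<le> (b - a) / \<delta>" using assms(2,3) by simp
    then show "2 * real m \<le> 2 * ((b - a) / \<delta> + 1)"
      unfolding m_def of_nat_add of_nat_1 by (intro mult_left_mono add_right_mono) simp_all
  qed
  also have "\<dots> = (\<Sum>j\<in>J. 16 * \<bar>c j\<bar> * N j) + 2 * ((b - a) / \<delta> + 1)"
    using assms(3) by (simp add: sum_distrib_left mult.assoc)
  finally show ?thesis unfolding N_def .
qed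

text \<open>The assumption \<open>1 \<le> t\<close> absorbs the \<open>(b - a) / \<delta>\<close> columns, each needing at least
  one ball.\<close>

lemma upper_box_dim_graph_lincomb_le:
  fixes g :: "'j \<Rightarrow> real \<Rightarrow> real"
  assumes "finite J" "a \<le> b" "1 \<le> t"
    and cont: "\<And>j. j \<in> J \<Longrightarrow> continuous_on {a..b} (g j)"
    and dim: "\<And>j. j \<in> J \<Longrightarrow> upper_box_dim (graph_on (g j) {a..b}) \<le> ereal t"
  shows "upper_box_dim (graph_on (\<lambda>x. \<Sum>j\<in>J. c j * g j x) {a..b}) \<le> ereal t"
proof (rule ereal_le_epsilon2)
  fix e :: real assume "0 < e"
  define t' where "t' = t + e"
  define K where "K = (\<Sum>j\<in>J. 16 * \<bar>c j\<bar>) + 2 * (b - a) + 2"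
  have "upper_box_dim (graph_on (g j) {a..b}) < ereal t'" if "j \<in> J" for j
    using dim[OF that] \<open>0 < e\<close> unfolding t'_def by (simp add: le_less_trans)
  then have "\<forall>\<^sub>F \<delta> in at_right 0. \<forall>j\<in>J. real (cover_num \<delta> (graph_on (g j) {a..b})) \<le> \<delta> powr (- t')"
    by (intro eventually_ball_finite[OF assms(1)] ballI eventually_cover_num_le_powr)
  then have "\<forall>\<^sub>F \<delta> in at_right 0.
      real (cover_num \<delta> (graph_on (\<lambda>x. \<Sum>j\<in>J. c j * g j x) {a..b})) \<le> K * \<delta> powr (- t')"
    using eventually_at_right_real[OF zero_less_one]
  proof eventually_elim
    case (elim \<delta>)
    then have "0 < \<delta>" "\<delta> \<le> 1" by auto
    have "1 \<le> t'" using assms(3) \<open>0 < e\<close> by (simp add: t'_def)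
    have "1 / \<delta> = \<delta> powr (- 1)" using \<open>0 < \<delta>\<close> by (simp add: powr_minus_divide)
    also have "\<dots> \<le> \<delta> powr (- t')" using \<open>0 < \<delta>\<close> \<open>\<delta> \<le> 1\<close> \<open>1 \<le> t'\<close> by (intro powr_mono') auto
    finally have inv: "1 / \<delta> \<le> \<delta> powr (- t')" .
    have one: "1 \<le> \<delta> powr (- t')"
      using powr_mono'[of "- t'" 0 \<delta>] \<open>0 < \<delta>\<close> \<open>\<delta> \<le> 1\<close> \<open>1 \<le> t'\<close> by simp
    have "real (cover_num \<delta> (graph_on (\<lambda>x. \<Sum>j\<in>J. c j * g j x) {a..b}))
        \<le> (\<Sum>j\<in>J. 16 * \<bar>c j\<bar> * real (cover_num \<delta> (graph_on (g j) {a..b}))) + 2 * ((b - a) / \<delta> + 1)"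
      using \<open>0 < \<delta>\<close> by (intro cover_num_graph_lincomb_le assms(1,2) cont)
    also have "\<dots> \<le> (\<Sum>j\<in>J. 16 * \<bar>c j\<bar> * \<delta> powr (- t'))
        + 2 * ((b - a) * \<delta> powr (- t') + \<delta> powr (- t'))"
    proof (intro add_mono sum_mono mult_left_mono)
      show "(b - a) / \<delta> \<le> (b - a) * \<delta> powr (- t')"
        using mult_left_mono[OF inv, of "b - a"] assms(2) by simp
    qed (use elim one in auto)
    also have "\<dots> = (\<Sum>j\<in>J. 16 * \<bar>c j\<bar>) * \<delta> powr (- t')
        + 2 * ((b - a) * \<delta> powr (- t') + \<delta> powr (- t'))"
      by (simp only: sum_distrib_right)
    also have "\<dots> = K * \<delta> powr (- t')"
      by (simp add: K_def algebra_simps)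
    finally show ?case .
  qed
  then have "upper_box_dim (graph_on (\<lambda>x. \<Sum>j\<in>J. c j * g j x) {a..b}) \<le> ereal t'"
    using assms(3) \<open>0 < e\<close> by (intro upper_box_dim_le_of_cover_num_le) (auto simp: t'_def)
  then show "upper_box_dim (graph_on (\<lambda>x. \<Sum>j\<in>J. c j * g j x) {a..b}) \<le> ereal t + ereal e"
    by (simp add: t'_def)
qed

lemma upper_box_dim_graph_le_if_lincomb_on_Icc:
  fixes g :: "'j \<Rightarrow> real \<Rightarrow> real"
  assumes "u \<le> v" "{u..v} \<subseteq> S" "compact S" "continuous_on S h" "1 \<le> t" "finite J"
    and cont: "\<And>j. j \<in> J \<Longrightarrow> continuous_on {u..v} (g j)"
    and dim: "\<And>j. j \<in> J \<Longrightarrow> upper_box_dim (graph_on (g j) {u..v}) \<le> ereal t"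
    and lincomb: "\<And>x. x \<in> {u..v} \<Longrightarrow> h x = (\<Sum>j\<in>J. c j * g j x)"
    and dim_outside: "upper_box_dim (graph_on h (S - {u<..<v})) \<le> ereal t"
  shows "upper_box_dim (graph_on h S) \<le> ereal t"
proof -
  have "S = {u..v} \<union> (S - {u<..<v})" using assms(2) by auto
  then have split: "graph_on h S = graph_on h {u..v} \<union> graph_on h (S - {u<..<v})"
    unfolding graph_on_Un[symmetric] by (rule arg_cong)
  have "graph_on h {u..v} = graph_on (\<lambda>x. \<Sum>j\<in>J. c j * g j x) {u..v}"
    by (rule graph_on_cong) (rule lincomb)
  moreover have "upper_box_dim (graph_on (\<lambda>x. \<Sum>j\<in>J. c j * g j x) {u..v}) \<le> ereal t"
    using assms(6,1,5) cont dim by (rule upper_box_dim_graph_lincomb_le)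
  ultimately have "upper_box_dim (graph_on h {u..v}) \<le> ereal t" by simp
  moreover have "compact (graph_on h {u..v})" "compact (graph_on h (S - {u<..<v}))"
    using assms(2,3,4) by (auto intro!: compact_graph_on compact_diff intro: continuous_on_subset)
  ultimately show ?thesis
    unfolding split using assms(5) dim_outside by (intro upper_box_dim_Un_le) auto
qed

section \<open>Dependence of \<open>n + 1\<close> combinations of \<open>n\<close> functions\<close>

lemma exists_nontrivial_linear_relation:
  fixes v :: "'k \<Rightarrow> nat \<Rightarrow> real"
  assumes "finite K" "n < card K"
  shows "\<exists>c. (\<exists>k\<in>K. c k \<noteq> 0) \<and> (\<forall>i<n. (\<Sum>k\<in>K. c k * v k i) = 0)"
  using assms
proof (induction n arbitrary: K v)
  case 0
  then obtain k where "k \<in> K" by (metis card.empty ex_in_conv less_irrefl)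
  then show ?case by (intro exI[of _ "\<lambda>_. 1"]) auto
next
  case (Suc n K v)
  show ?case
  proof (cases "\<forall>k\<in>K. v k n = 0")
    case True
    obtain c where c: "\<exists>k\<in>K. c k \<noteq> 0" "\<forall>i<n. (\<Sum>k\<in>K. c k * v k i) = 0"
      using Suc.IH[of K v] Suc.prems by auto
    with True show ?thesis by (auto simp: less_Suc_eq)
  next
    case False
    then obtain k0 where k0: "k0 \<in> K" "v k0 n \<noteq> 0" by blast
    define w where "w k i = v k i - v k n / v k0 n * v k0 i" for k i
    have "finite (K - {k0})" "n < card (K - {k0})" using Suc.prems k0(1) by auto
    then obtain c' where c': "\<exists>k\<in>K - {k0}. c' k \<noteq> 0" "\<forall>i<n. (\<Sum>k\<in>K - {k0}. c' k * w k i) = 0"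
      using Suc.IH[of "K - {k0}" w] by blast
    define c where "c k = (if k = k0 then - (\<Sum>k\<in>K - {k0}. c' k * v k n) / v k0 n else c' k)" for k
    have "(\<Sum>k\<in>K. c k * v k i) = (\<Sum>k\<in>K - {k0}. c' k * w k i)" for i
    proof -
      have "(\<Sum>k\<in>K. c k * v k i) = c k0 * v k0 i + (\<Sum>k\<in>K - {k0}. c' k * v k i)"
        using Suc.prems(1) k0(1) by (simp add: sum.remove c_def)
      also have "\<dots> = (\<Sum>k\<in>K - {k0}. c' k * w k i)"
        by (simp add: c_def w_def algebra_simps sum_subtractf sum_distrib_left sum_divide_distrib
            sum_distrib_right)
      finally show ?thesis .
    qed
    moreover have "w k n = 0" for k using k0(2) by (simp add: w_def)
    ultimately have "\<forall>i<Suc n. (\<Sum>k\<in>K. c k * v k i) = 0" using c'(2) by (auto simp: less_Suc_eq)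
    moreover have "\<exists>k\<in>K. c k \<noteq> 0" using c'(1) by (auto simp: c_def)
    ultimately show ?thesis by blast
  qed
qed

lemma exists_lincomb_of_others:
  fixes v :: "'k \<Rightarrow> nat \<Rightarrow> real" and f :: "nat \<Rightarrow> 'a \<Rightarrow> real"
  assumes "finite K" "n < card K"
  obtains k0 c where "k0 \<in> K"
    "\<And>x. (\<Sum>i<n. v k0 i * f i x) = (\<Sum>k\<in>K - {k0}. c k * (\<Sum>i<n. v k i * f i x))"
proof -
  obtain c where c: "\<exists>k\<in>K. c k \<noteq> 0" "\<forall>i<n. (\<Sum>k\<in>K. c k * v k i) = 0"
    using exists_nontrivial_linear_relation[OF assms] by blast
  then obtain k0 where k0: "k0 \<in> K" "c k0 \<noteq> 0" by blast
  define g where "g k x = (\<Sum>i<n. v k i * f i x)" for k x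
  have "(\<Sum>k\<in>K. c k * g k x) = 0" for x
  proof -
    have "(\<Sum>k\<in>K. c k * g k x) = (\<Sum>i<n. (\<Sum>k\<in>K. c k * v k i) * f i x)"
      unfolding g_def by (simp add: sum_distrib_left sum_distrib_right mult.assoc sum.swap[of _ K])
    also have "\<dots> = 0" using c(2) by simp
    finally show ?thesis .
  qed
  then have "c k0 * g k0 x + (\<Sum>k\<in>K - {k0}. c k * g k x) = 0" for x
    using assms(1) k0(1) by (simp add: sum.remove)
  then have "g k0 x = (\<Sum>k\<in>K - {k0}. (- c k / c k0) * g k x)" for x
    using k0(2)
    by (simp add: sum_divide_distrib[symmetric] sum_negf eq_neg_iff_add_eq_0 field_simps)
  with k0(1) show ?thesis unfolding g_def by (rule that)
qed

lemma finite_less_ereal_obtain_bound: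
  fixes x :: "'a \<Rightarrow> ereal"
  assumes "finite K" "\<And>k. k \<in> K \<Longrightarrow> x k < ereal s" "r < s"
  obtains t where "r \<le> t" "t < s" "\<And>k. k \<in> K \<Longrightarrow> x k \<le> ereal t"
proof -
  have "Max (insert (ereal r) (x ` K)) < ereal s"
    using assms by (simp add: Max_less_iff)
  then obtain t where t: "Max (insert (ereal r) (x ` K)) < ereal t" "ereal t < ereal s"
    using ereal_dense2 by blast
  then have "ereal r < ereal t" "\<And>k. k \<in> K \<Longrightarrow> x k < ereal t"
    using assms(1) by (simp_all add: Max_less_iff)
  with t(2) show ?thesis by (intro that) (auto intro: less_imp_le)
qed

lemma exists_lincomb_upper_box_dim_less:
  fixes f :: "nat \<Rightarrow> real \<Rightarrow> real" and A :: "nat \<Rightarrow> nat \<Rightarrow> real"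
  assumes "1 < s" and cont: "\<And>i. i < n \<Longrightarrow> continuous_on {0..1} (f i)"
    and dim: "\<And>k. k \<le> n \<Longrightarrow> upper_box_dim (graph_on (\<lambda>x. \<Sum>i<n. A k i * f i x)
               ({0..1} - {real k / real (n + 1) <..< real (Suc k) / real (n + 1)})) < ereal s"
  shows "\<exists>k\<le>n. upper_box_dim (graph_on (\<lambda>x. \<Sum>i<n. A k i * f i x) {0..1}) < ereal s"
proof -
  define u where "u k = real k / real (n + 1)" for k :: nat
  define g where "g k = (\<lambda>x. \<Sum>i<n. A k i * f i x)" for k
  define E where "E k = {0..1} - {u k<..<u (Suc k)}" for k
  obtain t where "1 \<le> t" "t < s"
    and dim_t: "\<And>k. k \<in> {..n} \<Longrightarrow> upper_box_dim (graph_on (g k) (E k)) \<le> ereal t"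
    using finite_less_ereal_obtain_bound[where x = "\<lambda>k. upper_box_dim (graph_on (g k) (E k))",
        OF finite_atMost _ \<open>1 < s\<close>] dim
    unfolding g_def E_def u_def by auto
  have cont_g: "continuous_on {0..1} (g k)" for k
    unfolding g_def by (intro continuous_intros cont) auto
  have cell: "0 \<le> u k" "u k \<le> u (Suc k)" "u (Suc k) \<le> 1" if "k \<le> n" for k
    using that by (auto simp: u_def divide_simps)
  have compact_E: "compact (E k)" for k
    unfolding E_def by (intro compact_diff) auto
  obtain k0 c where k0: "k0 \<le> n" and comb: "\<And>x. g k0 x = (\<Sum>k\<in>{..n} - {k0}. c k * g k x)"
    using exists_lincomb_of_others[of "{..n}" n A f] unfolding g_def by auto
  have sub: "{u k0..u (Suc k0)} \<subseteq> E k" if "k \<in> {..n} - {k0}" for k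
  proof -
    from that have "Suc k \<le> k0 \<or> Suc k0 \<le> k" by auto
    then have "u (Suc k) \<le> u k0 \<or> u (Suc k0) \<le> u k"
      by (auto simp: u_def divide_right_mono)
    then show ?thesis using cell[OF k0] unfolding E_def by auto
  qed
  have "upper_box_dim (graph_on (g k0) {0..1}) \<le> ereal t"
  proof (rule upper_box_dim_graph_le_if_lincomb_on_Icc[where J = "{..n} - {k0}" and g = g and c = c])
    show "u k0 \<le> u (Suc k0)" "{u k0..u (Suc k0)} \<subseteq> {0..1}" using cell[OF k0] by auto
    show "upper_box_dim (graph_on (g k0) ({0..1} - {u k0<..<u (Suc k0)})) \<le> ereal t"
      using dim_t k0 by (simp add: E_def)
    show "upper_box_dim (graph_on (g k) {u k0..u (Suc k0)}) \<le> ereal t" if "k \<in> {..n} - {k0}" for k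
    proof -
      have "upper_box_dim (graph_on (g k) {u k0..u (Suc k0)})
          \<le> upper_box_dim (graph_on (g k) (E k))"
        using sub[OF that] compact_E
        by (intro upper_box_dim_mono graph_on_mono compact_graph_on continuous_on_subset[OF cont_g])
           (auto simp: E_def)
      also have "\<dots> \<le> ereal t" using dim_t that by simp
      finally show ?thesis .
    qed
    show "continuous_on {0..1} (g k0)" by (rule cont_g)
    show "continuous_on {u k0..u (Suc k0)} (g k)" for k
      using cell[OF k0] by (intro continuous_on_subset[OF cont_g]) auto
  qed (use \<open>1 \<le> t\<close> comb in auto)
  then have "upper_box_dim (graph_on (g k0) {0..1}) < ereal s"
    using \<open>t < s\<close> by (simp add: le_less_trans)
  with k0 show ?thesis unfolding g_def by blast
qed

theorem proposition4p1:
  fixes s :: real and n :: nat and f :: "nat \<Rightarrow> real \<Rightarrow> real"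
  assumes s_range: "1 < s" "s \<le> 2"
    and cont: "\<And>i. i < n \<Longrightarrow> continuous_on {0..1} (f i)"
    and dim_f: "\<And>i. i < n \<Longrightarrow> upper_box_dim (graph_on (f i) {0..1}) = ereal s"
    and lin_indep: "\<And>a :: nat \<Rightarrow> real.
          (\<forall>x\<in>{0..1}. (\<Sum>i<n. a i * f i x) = 0) \<Longrightarrow> (\<forall>i<n. a i = 0)"
    and span: "\<And>a :: nat \<Rightarrow> real.
          (\<forall>x\<in>{0..1}. (\<Sum>i<n. a i * f i x) = 0) \<or>
          upper_box_dim (graph_on (\<lambda>x. \<Sum>i<n. a i * f i x) {0..1}) = ereal s"
  shows "\<exists>u v. 0 \<le> u \<and> u < v \<and> v \<le> 1 \<and>
           (\<forall>a :: nat \<Rightarrow> real. (\<exists>i<n. a i \<noteq> 0) \<longrightarrow>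
              upper_box_dim (graph_on (\<lambda>x. \<Sum>i<n. a i * f i x) ({0..1} - {u<..<v})) = ereal s)"
proof (rule ccontr)
  assume contra: "\<not> ?thesis"
  define g where "g a = (\<lambda>x. \<Sum>i<n. a i * f i x)" for a
  define E where "E k = {0..1} - {real k / real (n + 1) <..< real (Suc k) / real (n + 1)}" for k
  have "\<forall>k\<in>{..n}. \<exists>a. (\<exists>i<n. a i \<noteq> 0) \<and> upper_box_dim (graph_on (g a) (E k)) \<noteq> ereal s"
  proof
    fix k assume "k \<in> {..n}"
    then have "0 \<le> real k / real (n + 1)" "real k / real (n + 1) < real (Suc k) / real (n + 1)"
      "real (Suc k) / real (n + 1) \<le> 1" by (auto simp: divide_simps)
    with contra show "\<exists>a. (\<exists>i<n. a i \<noteq> 0) \<and> upper_box_dim (graph_on (g a) (E k)) \<noteq> ereal s"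
      unfolding g_def E_def by blast
  qed
  from bchoice[OF this] obtain A where A: "\<forall>k\<in>{..n}.
      (\<exists>i<n. A k i \<noteq> 0) \<and> upper_box_dim (graph_on (g (A k)) (E k)) \<noteq> ereal s"
    by blast
  have full: "upper_box_dim (graph_on (g (A k)) {0..1}) = ereal s" if "k \<le> n" for k
    using span[of "A k"] lin_indep[of "A k"] A that unfolding g_def by auto
  have lt: "upper_box_dim (graph_on (g (A k)) (E k)) < ereal s" if "k \<le> n" for k
  proof (rule order_le_neq_trans)
    have "continuous_on {0..1} (g (A k))" unfolding g_def by (intro continuous_intros cont) auto
    then show "upper_box_dim (graph_on (g (A k)) (E k)) \<le> ereal s"
      unfolding full[OF that, symmetric]
      by (intro upper_box_dim_mono graph_on_mono compact_graph_on) (auto simp: E_def)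
    show "upper_box_dim (graph_on (g (A k)) (E k)) \<noteq> ereal s" using A that by simp
  qed
  have "\<exists>k\<le>n. upper_box_dim (graph_on (g (A k)) {0..1}) < ereal s"
    using exists_lincomb_upper_box_dim_less[OF s_range(1) cont lt[unfolded g_def E_def]]
    unfolding g_def .
  with full show False by fastforce
qed

end
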